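(* Let $\Gamma$ be a group and $S$ a $\Gamma$-graded inverse semigroup equipped with a non-degenerate partial action on a nonempty set $X$. If $S$ is strongly graded, then the groupoid of germs $S\ltimes X$ is strongly graded in the induced $\Gamma$-grading.
   Context: Semigroups have a zero; $S$ is $\Gamma$-graded via $\deg:S\setminus\{0\}\to\Gamma$ with $\deg(st)=\deg(s)\deg(t)$ whenever $st\neq0$; $S_\alpha=\deg^{-1}(\alpha)\cup\{0\}$; strongly graded: $S_\alpha S_\beta=S_{\alpha\beta}$. A partial action of $S$ on $X$ is a zero-preserving homomorphism $s\mapsto\theta_s$ from $S$ into the symmetric inverse monoid $\mathcal I(X)$ (partial bijections of $X$, zero the empty map); $X_s=\mathrm{Dom}(\theta_s)$; it is non-degenerate if $X=\bigcup_{e\in E(S)}X_e$. On $\{(s,x):s\in S,x\in X_s\}$ let $(s,x)\sim(t,y)$ iff $x=y$ and there is an idempotent $e$ with $x\in X_e$ and $se=te$; the class $[s,x]$ is the germ. $S\ltimes X$ is the set of germs, a groupoid with $\mathbf d([s,x])=x$, $\mathbf r([s,x])=\theta_s(x)$, $[s,x][t,y]=[st,y]$ when $x=\theta_t(y)$, $[s,x]^{-1}=[s^{-1},\theta_s(x)]$, unit space identified with $X$. Its induced grading is $[s,x]\mapsto\deg(s)$, with $(S\ltimes X)_\alpha$ the germs of degree $\alpha$. A graded groupoid $\mathscr G$ is strongly graded if $\mathscr G_\alpha\mathscr G_\beta=\mathscr G_{\alpha\beta}$ for all $\alpha,\beta$, where $AB=\{ab:a\in A,b\in B,\mathbf d(a)=\mathbf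 r(b)\}$. *)

theory Defs
  imports Main
begin

definition inverse_semigroup0 :: "'s set \<Rightarrow> ('s \<Rightarrow> 's \<Rightarrow> 's) \<Rightarrow> 's \<Rightarrow> bool" where
  "inverse_semigroup0 S mult z \<longleftrightarrow>
     z \<in> S \<and>
     (\<forall>s\<in>S. \<forall>t\<in>S. mult s t \<in> S) \<and>
     (\<forall>s\<in>S. \<forall>t\<in>S. \<forall>u\<in>S. mult (mult s t) u = mult s (mult t u)) \<and>
     (\<forall>s\<in>S. mult z s = z \<and> mult s z = z) \<and>
     (\<forall>s\<in>S. \<exists>!t. t \<in> S \<and> mult (mult s t) s = s \<and> mult (mult t s) t = t)"

definition idems :: "'s set \<Rightarrow> ('s \<Rightarrow> 's \<Rightarrow> 's) \<Rightarrow> 's set" where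
  "idems S mult = {e \<in> S. mult e e = e}"

definition graded :: "'s set \<Rightarrow> ('s \<Rightarrow> 's \<Rightarrow> 's) \<Rightarrow> 's \<Rightarrow> ('s \<Rightarrow> 'g::group_add) \<Rightarrow> bool" where
  "graded S mult z deg \<longleftrightarrow>
     (\<forall>s\<in>S - {z}. \<forall>t\<in>S - {z}. mult s t \<noteq> z \<longrightarrow> deg (mult s t) = deg s + deg t)"

definition homog :: "'s set \<Rightarrow> 's \<Rightarrow> ('s \<Rightarrow> 'g::group_add) \<Rightarrow> 'g \<Rightarrow> 's set" where
  "homog S z deg \<alpha> = {s \<in> S - {z}. deg s = \<alpha>} \<union> {z}"

definition set_mult :: "('s \<Rightarrow> 's \<Rightarrow> 's) \<Rightarrow> 's set \<Rightarrow> 's set \<Rightarrow> 's set" where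
  "set_mult mult A B = {mult a b | a b. a \<in> A \<and> b \<in> B}"

definition strongly_graded_sg :: "'s set \<Rightarrow> ('s \<Rightarrow> 's \<Rightarrow> 's) \<Rightarrow> 's \<Rightarrow> ('s \<Rightarrow> 'g::group_add) \<Rightarrow> bool" where
  "strongly_graded_sg S mult z deg \<longleftrightarrow>
     (\<forall>\<alpha> \<beta>. set_mult mult (homog S z deg \<alpha>) (homog S z deg \<beta>) = homog S z deg (\<alpha> + \<beta>))"

definition partial_bij :: "'x set \<Rightarrow> ('x \<rightharpoonup> 'x) \<Rightarrow> bool" where
  "partial_bij X f \<longleftrightarrow> dom f \<subseteq> X \<and> ran f \<subseteq> X \<and> inj_on f (dom f)"

definition partial_action ::
  "'s set \<Rightarrow> ('s \<Rightarrow> 's \<Rightarrow> 's) \<Rightarrow> 's \<Rightarrow> 'x set \<Rightarrow> ('s \<Rightarrow> 'x \<rightharpoonup> 'x) \<Rightarrow> bool" where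
  "partial_action S mult z X \<theta> \<longleftrightarrow>
     (\<forall>s\<in>S. partial_bij X (\<theta> s)) \<and>
     (\<forall>s\<in>S. \<forall>t\<in>S. \<theta> (mult s t) = \<theta> s \<circ>\<^sub>m \<theta> t) \<and>
     \<theta> z = Map.empty"

definition non_degenerate ::
  "'s set \<Rightarrow> ('s \<Rightarrow> 's \<Rightarrow> 's) \<Rightarrow> 'x set \<Rightarrow> ('s \<Rightarrow> 'x \<rightharpoonup> 'x) \<Rightarrow> bool" where
  "non_degenerate S mult X \<theta> \<longleftrightarrow> X = (\<Union>e\<in>idems S mult. dom (\<theta> e))"

definition germ_pairs :: "'s set \<Rightarrow> ('s \<Rightarrow> 'x \<rightharpoonup> 'x) \<Rightarrow> ('s \<times> 'x) set" where
  "germ_pairs S \<theta> = {(s, x). s \<in> S \<and> x \<in> dom (\<theta> s)}"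

definition germ_equiv ::
  "'s set \<Rightarrow> ('s \<Rightarrow> 's \<Rightarrow> 's) \<Rightarrow> ('s \<Rightarrow> 'x \<rightharpoonup> 'x) \<Rightarrow> 's \<times> 'x \<Rightarrow> 's \<times> 'x \<Rightarrow> bool" where
  "germ_equiv S mult \<theta> p q \<longleftrightarrow>
     snd p = snd q \<and> (\<exists>e\<in>idems S mult. snd p \<in> dom (\<theta> e) \<and> mult (fst p) e = mult (fst q) e)"

definition germ ::
  "'s set \<Rightarrow> ('s \<Rightarrow> 's \<Rightarrow> 's) \<Rightarrow> ('s \<Rightarrow> 'x \<rightharpoonup> 'x) \<Rightarrow> 's \<Rightarrow> 'x \<Rightarrow> ('s \<times> 'x) set" where
  "germ S mult \<theta> s x = {q \<in> germ_pairs S \<theta>. germ_equiv S mult \<theta> (s, x) q}"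

definition germs ::
  "'s set \<Rightarrow> ('s \<Rightarrow> 's \<Rightarrow> 's) \<Rightarrow> ('s \<Rightarrow> 'x \<rightharpoonup> 'x) \<Rightarrow> ('s \<times> 'x) set set" where
  "germs S mult \<theta> = {germ S mult \<theta> s x | s x. (s, x) \<in> germ_pairs S \<theta>}"

text \<open>Structure maps, defined via a chosen representative (well-defined on germs).\<close>

definition germ_rep :: "('s \<times> 'x) set \<Rightarrow> 's \<times> 'x" where
  "germ_rep g = (SOME p. p \<in> g)"

definition germ_d :: "('s \<times> 'x) set \<Rightarrow> 'x" where
  "germ_d g = snd (germ_rep g)"

definition germ_r :: "('s \<Rightarrow> 'x \<rightharpoonup> 'x) \<Rightarrow> ('s \<times> 'x) set \<Rightarrow> 'x" where
  "germ_r \<theta> g = the (\<theta> (fst (germ_rep g)) (snd (germ_rep g)))"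

definition germ_comp ::
  "'s set \<Rightarrow> ('s \<Rightarrow> 's \<Rightarrow> 's) \<Rightarrow> ('s \<Rightarrow> 'x \<rightharpoonup> 'x) \<Rightarrow> ('s \<times> 'x) set \<Rightarrow> ('s \<times> 'x) set \<Rightarrow> ('s \<times> 'x) set" where
  "germ_comp S mult \<theta> a b = germ S mult \<theta> (mult (fst (germ_rep a)) (fst (germ_rep b))) (snd (germ_rep b))"

definition germ_deg :: "('s \<Rightarrow> 'g) \<Rightarrow> ('s \<times> 'x) set \<Rightarrow> 'g" where
  "germ_deg deg g = deg (fst (germ_rep g))"

definition germ_homog ::
  "'s set \<Rightarrow> ('s \<Rightarrow> 's \<Rightarrow> 's) \<Rightarrow> ('s \<Rightarrow> 'x \<rightharpoonup> 'x) \<Rightarrow> ('s \<Rightarrow> 'g) \<Rightarrow> 'g \<Rightarrow> ('s \<times> 'x) set set" where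
  "germ_homog S mult \<theta> deg \<alpha> = {g \<in> germs S mult \<theta>. germ_deg deg g = \<alpha>}"

definition germ_set_mult ::
  "'s set \<Rightarrow> ('s \<Rightarrow> 's \<Rightarrow> 's) \<Rightarrow> ('s \<Rightarrow> 'x \<rightharpoonup> 'x) \<Rightarrow> ('s \<times> 'x) set set \<Rightarrow> ('s \<times> 'x) set set \<Rightarrow> ('s \<times> 'x) set set" where
  "germ_set_mult S mult \<theta> A B =
     {germ_comp S mult \<theta> a b | a b. a \<in> A \<and> b \<in> B \<and> germ_d a = germ_r \<theta> b}"

definition germ_strongly_graded ::
  "'s set \<Rightarrow> ('s \<Rightarrow> 's \<Rightarrow> 's) \<Rightarrow> ('s \<Rightarrow> 'x \<rightharpoonup> 'x) \<Rightarrow> ('s \<Rightarrow> 'g::group_add) \<Rightarrow> bool" where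
  "germ_strongly_graded S mult \<theta> deg \<longleftrightarrow>
     (\<forall>\<alpha> \<beta>. germ_set_mult S mult \<theta> (germ_homog S mult \<theta> deg \<alpha>) (germ_homog S mult \<theta> deg \<beta>)
             = germ_homog S mult \<theta> deg (\<alpha> + \<beta>))"

end

(* A germ [u, x] of degree alpha + beta has u = s t with deg s = alpha and deg t = beta,
   because S is strongly graded; as x lies in the domain of theta u = theta s o theta t,
   it factors as [u, x] = [s, theta t x] [t, x], a composable product of germs of degrees
   alpha and beta. The reverse inclusion holds since [s, y] [t, x] = [s t, x] and
   deg (s t) = deg s + deg t whenever s t is nonzero. What remains is to check that degree,
   source, range and product of germs do not depend on the chosen representatives. *)

theory Submission
  imports Defs
begin

locale inverse_semigroup_zero =
  fixes S :: "'s set" and mult :: "'s \<Rightarrow> 's \<Rightarrow> 's" (infixl "\<cdot>" 70) and z :: 's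
  assumes inverse_semigroup: "inverse_semigroup0 S mult z"
begin

abbreviation E :: "'s set" where
  "E \<equiv> idems S mult"

lemma mult_closed [simp]: "s \<in> S \<Longrightarrow> t \<in> S \<Longrightarrow> s \<cdot> t \<in> S"
  using inverse_semigroup unfolding inverse_semigroup0_def by blast

lemma mult_assoc [simp]: "s \<in> S \<Longrightarrow> t \<in> S \<Longrightarrow> u \<in> S \<Longrightarrow> s \<cdot> t \<cdot> u = s \<cdot> (t \<cdot> u)"
  using inverse_semigroup unfolding inverse_semigroup0_def by blast

lemma zero_closed: "z \<in> S"
  and zero_mult: "s \<in> S \<Longrightarrow> z \<cdot> s = z"
  and mult_zero: "s \<in> S \<Longrightarrow> s \<cdot> z = z"
  using inverse_semigroup unfolding inverse_semigroup0_def by blast+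

definition sinv :: "'s \<Rightarrow> 's" where
  "sinv s = (THE t. t \<in> S \<and> s \<cdot> t \<cdot> s = s \<and> t \<cdot> s \<cdot> t = t)"

lemma sinv_ex1: "s \<in> S \<Longrightarrow> \<exists>!t. t \<in> S \<and> s \<cdot> t \<cdot> s = s \<and> t \<cdot> s \<cdot> t = t"
  using inverse_semigroup unfolding inverse_semigroup0_def by blast

lemma
  assumes "s \<in> S"
  shows sinv_closed [simp]: "sinv s \<in> S"
    and mult_sinv_mult [simp]: "s \<cdot> (sinv s \<cdot> s) = s"
    and sinv_mult_sinv [simp]: "sinv s \<cdot> (s \<cdot> sinv s) = sinv s"
proof -
  have "sinv s \<in> S \<and> s \<cdot> sinv s \<cdot> s = s \<and> sinv s \<cdot> s \<cdot> sinv s = sinv s"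
    unfolding sinv_def using sinv_ex1[OF assms] by (rule theI')
  then show "sinv s \<in> S" "s \<cdot> (sinv s \<cdot> s) = s" "sinv s \<cdot> (s \<cdot> sinv s) = sinv s"
    using assms by auto
qed

lemma sinv_unique:
  assumes "s \<in> S" "t \<in> S" "s \<cdot> (t \<cdot> s) = s" "t \<cdot> (s \<cdot> t) = t"
  shows "t = sinv s"
  using sinv_ex1[of s] assms by (metis mult_assoc mult_sinv_mult sinv_closed sinv_mult_sinv)

lemma idemsD: "e \<in> E \<Longrightarrow> e \<in> S" "e \<in> E \<Longrightarrow> e \<cdot> e = e"
  unfolding idems_def by auto

lemma idemsI: "e \<in> S \<Longrightarrow> e \<cdot> e = e \<Longrightarrow> e \<in> E"
  unfolding idems_def by auto

lemma idem_mult_absorb [simp]: "e \<in> E \<Longrightarrow> u \<in> S \<Longrightarrow> e \<cdot> (e \<cdot> u) = e \<cdot> u"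
  by (metis idemsD mult_assoc)

lemma sinv_idem: "e \<in> E \<Longrightarrow> sinv e = e"
  by (metis idemsD sinv_unique)

(* f x e is a second inverse of e f, so it equals x = sinv (e f); hence x is idempotent
   and e f = sinv x = x. *)
lemma idems_mult_closed:
  assumes e: "e \<in> E" and f: "f \<in> E"
  shows "e \<cdot> f \<in> E"
proof -
  have eS: "e \<in> S" and fS: "f \<in> S" using e f by (auto dest: idemsD)
  define x where "x = sinv (e \<cdot> f)"
  have xS: "x \<in> S" using eS fS by (simp add: x_def)
  have efxef: "e \<cdot> (f \<cdot> (x \<cdot> (e \<cdot> f))) = e \<cdot> f"
    using mult_sinv_mult[of "e \<cdot> f"] eS fS by (simp add: x_def del: mult_sinv_mult)
  have xefx: "x \<cdot> (e \<cdot> (f \<cdot> x)) = x"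
    using sinv_mult_sinv[of "e \<cdot> f"] eS fS by (simp add: x_def del: sinv_mult_sinv)
  then have xefxe: "x \<cdot> (e \<cdot> (f \<cdot> (x \<cdot> e))) = x \<cdot> e"
    by (metis eS fS xS mult_assoc mult_closed)
  have "f \<cdot> (x \<cdot> e) = sinv (e \<cdot> f)"
    by (rule sinv_unique) (use e f eS fS xS efxef xefxe in simp_all)
  then have "x \<cdot> x = x"
    by (metis eS fS mult_assoc mult_closed xS xefxe x_def)
  have "e \<cdot> f = sinv x"
    by (rule sinv_unique) (use eS fS xS efxef xefx in simp_all)
  also have "\<dots> = x"
    using xS \<open>x \<cdot> x = x\<close> by (simp add: sinv_idem idemsI)
  finally show ?thesis
    using xS \<open>x \<cdot> x = x\<close> by (simp add: idemsI)
qed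

lemma idems_commute:
  assumes e: "e \<in> E" and f: "f \<in> E"
  shows "e \<cdot> f = f \<cdot> e"
proof -
  have eS: "e \<in> S" and fS: "f \<in> S" using e f by (auto dest: idemsD)
  have ef: "e \<cdot> f \<in> E" and fe: "f \<cdot> e \<in> E"
    using e f by (auto intro: idems_mult_closed)
  have "e \<cdot> (f \<cdot> (e \<cdot> f)) = e \<cdot> f" "f \<cdot> (e \<cdot> (f \<cdot> e)) = f \<cdot> e"
    using idemsD(2)[OF ef] idemsD(2)[OF fe] eS fS by simp_all
  then have "f \<cdot> e = sinv (e \<cdot> f)"
    by (intro sinv_unique) (use e f eS fS in simp_all)
  then show ?thesis
    using ef sinv_idem by simp
qed

lemma mult_sinv_idem: "s \<in> S \<Longrightarrow> s \<cdot> sinv s \<in> E"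
  by (rule idemsI) simp_all

lemma sinv_mult_idem: "s \<in> S \<Longrightarrow> sinv s \<cdot> s \<in> E"
  by (rule idemsI) simp_all

lemma
  assumes s: "s \<in> S" and f: "f \<in> E"
  shows conj_idem: "sinv s \<cdot> (f \<cdot> s) \<in> E"
    and mult_conj_idem: "s \<cdot> (sinv s \<cdot> (f \<cdot> s)) = f \<cdot> s"
proof -
  have fS: "f \<in> S" using f by (rule idemsD)
  have "s \<cdot> (sinv s \<cdot> (f \<cdot> s)) = f \<cdot> (s \<cdot> sinv s) \<cdot> s"
    using idems_commute[OF mult_sinv_idem[OF s] f] s fS by (simp flip: mult_assoc)
  then show conj: "s \<cdot> (sinv s \<cdot> (f \<cdot> s)) = f \<cdot> s"
    using s fS by simp
  show "sinv s \<cdot> (f \<cdot> s) \<in> E"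
    by (rule idemsI) (use s f fS conj in simp_all)
qed

end

locale inverse_semigroup_action =
  inverse_semigroup_zero S mult z
  for S :: "'s set" and mult :: "'s \<Rightarrow> 's \<Rightarrow> 's" (infixl "\<cdot>" 70) and z +
  fixes X :: "'x set" and \<theta> :: "'s \<Rightarrow> 'x \<rightharpoonup> 'x"
  assumes partial_action: "partial_action S mult z X \<theta>"
begin

lemma act_mult:
  "s \<in> S \<Longrightarrow> t \<in> S \<Longrightarrow> \<theta> (s \<cdot> t) x = (case \<theta> t x of None \<Rightarrow> None | Some y \<Rightarrow> \<theta> s y)"
  using partial_action unfolding partial_action_def by (simp add: map_comp_def)

lemma dom_act_nonzero: "x \<in> dom (\<theta> s) \<Longrightarrow> s \<noteq> z"
  using partial_action unfolding partial_action_def by auto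

lemma act_inj: "s \<in> S \<Longrightarrow> \<theta> s x = Some y \<Longrightarrow> \<theta> s x' = Some y \<Longrightarrow> x = x'"
  using partial_action unfolding partial_action_def partial_bij_def inj_on_def by (metis domI)

lemma idem_act_fix:
  assumes e: "e \<in> E" and x: "x \<in> dom (\<theta> e)"
  shows "\<theta> e x = Some x"
proof -
  obtain y where y: "\<theta> e x = Some y"
    using x by auto
  have "\<theta> e y = \<theta> (e \<cdot> e) x"
    using act_mult[of e e x] y idemsD[OF e] by simp
  then have "\<theta> e y = Some y"
    using y idemsD[OF e] by simp
  then show ?thesis
    using act_inj y idemsD[OF e] by metis
qed

lemma act_mult_idem: "s \<in> S \<Longrightarrow> e \<in> E \<Longrightarrow> x \<in> dom (\<theta> e) \<Longrightarrow> \<theta> (s \<cdot> e) x = \<theta> s x"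
  by (simp add: act_mult idem_act_fix idemsD)

lemma act_sinv:
  assumes s: "s \<in> S" and x: "\<theta> s x = Some y"
  shows "\<theta> (sinv s) y = Some x"
proof -
  have "\<theta> s x = \<theta> (s \<cdot> sinv s \<cdot> s) x"
    using s by simp
  also have "\<dots> = (case \<theta> (sinv s) y of None \<Rightarrow> None | Some v \<Rightarrow> \<theta> s v)"
    using s x by (simp add: act_mult del: mult_assoc)
  finally obtain v where "\<theta> (sinv s) y = Some v" "\<theta> s v = Some y"
    using x by (cases "\<theta> (sinv s) y") auto
  then show ?thesis
    using act_inj s x by metis
qed

lemma dom_act_sinv_mult: "s \<in> S \<Longrightarrow> x \<in> dom (\<theta> s) \<Longrightarrow> x \<in> dom (\<theta> (sinv s \<cdot> s))"
  by (auto simp: act_mult act_sinv)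

lemma germ_pairs_iff [simp]: "(s, x) \<in> germ_pairs S \<theta> \<longleftrightarrow> s \<in> S \<and> x \<in> dom (\<theta> s)"
  unfolding germ_pairs_def by simp

lemma mem_germ_iff:
  "(t, y) \<in> germ S mult \<theta> s x \<longleftrightarrow>
     t \<in> S \<and> y = x \<and> x \<in> dom (\<theta> t) \<and> (\<exists>e\<in>E. x \<in> dom (\<theta> e) \<and> s \<cdot> e = t \<cdot> e)"
  unfolding germ_def germ_equiv_def by auto

lemma germ_self: "s \<in> S \<Longrightarrow> x \<in> dom (\<theta> s) \<Longrightarrow> (s, x) \<in> germ S mult \<theta> s x"
  unfolding mem_germ_iff using sinv_mult_idem dom_act_sinv_mult by blast

lemma germ_in_germs: "s \<in> S \<Longrightarrow> x \<in> dom (\<theta> s) \<Longrightarrow> germ S mult \<theta> s x \<in> germs S mult \<theta>"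
  unfolding germs_def by auto

lemma germsE:
  assumes "g \<in> germs S mult \<theta>"
  obtains s x where "s \<in> S" "x \<in> dom (\<theta> s)" "g = germ S mult \<theta> s x"
  using assms unfolding germs_def by auto

lemma germ_repE:
  assumes "s \<in> S" "x \<in> dom (\<theta> s)"
  obtains t e where "germ_rep (germ S mult \<theta> s x) = (t, x)" "t \<in> S" "e \<in> E"
    "x \<in> dom (\<theta> e)" "s \<cdot> e = t \<cdot> e"
proof -
  obtain t y where rep: "germ_rep (germ S mult \<theta> s x) = (t, y)"
    by fastforce
  have "(t, y) \<in> germ S mult \<theta> s x"
    unfolding rep[symmetric] germ_rep_def using germ_self[OF assms] by (rule someI)
  then show ?thesis
    using that rep unfolding mem_germ_iff by blast
qed

lemma germ_d_germ:
  assumes "s \<in> S" "x \<in> dom (\<theta> s)"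
  shows "germ_d (germ S mult \<theta> s x) = x"
proof -
  obtain t where "germ_rep (germ S mult \<theta> s x) = (t, x)"
    using germ_repE[OF assms] by metis
  then show ?thesis
    unfolding germ_d_def by simp
qed

lemma germ_r_germ:
  assumes s: "s \<in> S" and x: "x \<in> dom (\<theta> s)"
  shows "germ_r \<theta> (germ S mult \<theta> s x) = the (\<theta> s x)"
proof -
  obtain t e where rep: "germ_rep (germ S mult \<theta> s x) = (t, x)" "t \<in> S" "e \<in> E"
    "x \<in> dom (\<theta> e)" "s \<cdot> e = t \<cdot> e"
    using germ_repE[OF s x] .
  have "\<theta> t x = \<theta> s x"
    using act_mult_idem[of t e x] act_mult_idem[of s e x] rep s by simp
  then show ?thesis
    unfolding germ_r_def rep(1) by simp
qed

lemma germ_eqI: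
  assumes s: "s \<in> S" and t: "t \<in> S" and k: "k \<in> E" "x \<in> dom (\<theta> k)" and st: "s \<cdot> k = t \<cdot> k"
  shows "germ S mult \<theta> s x = germ S mult \<theta> t x"
proof -
  have subset: "germ S mult \<theta> s x \<subseteq> germ S mult \<theta> t x"
    if s: "s \<in> S" and t: "t \<in> S" and st: "s \<cdot> k = t \<cdot> k" for s t
  proof (rule subrelI)
    fix u y assume "(u, y) \<in> germ S mult \<theta> s x"
    then obtain e where u: "u \<in> S" "y = x" "x \<in> dom (\<theta> u)"
      and e: "e \<in> E" "x \<in> dom (\<theta> e)" "s \<cdot> e = u \<cdot> e"
      unfolding mem_germ_iff by blast
    have kS: "k \<in> S" and eS: "e \<in> S" using k e by (auto dest: idemsD)
    have "t \<cdot> (k \<cdot> e) = s \<cdot> (k \<cdot> e)"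
      using arg_cong[OF st, of "\<lambda>v. v \<cdot> e"] s t kS eS by simp
    also have "\<dots> = s \<cdot> (e \<cdot> k)"
      using idems_commute[OF k(1) e(1)] by simp
    also have "\<dots> = u \<cdot> (e \<cdot> k)"
      using arg_cong[OF e(3), of "\<lambda>v. v \<cdot> k"] s u(1) kS eS by simp
    also have "\<dots> = u \<cdot> (k \<cdot> e)"
      using idems_commute[OF k(1) e(1)] by simp
    finally have "t \<cdot> (k \<cdot> e) = u \<cdot> (k \<cdot> e)" .
    moreover have "k \<cdot> e \<in> E" "x \<in> dom (\<theta> (k \<cdot> e))"
      using idems_mult_closed k e kS act_mult_idem by (auto simp: domIff)
    ultimately show "(u, y) \<in> germ S mult \<theta> t x"
      unfolding mem_germ_iff using u by blast
  qed
  show ?thesis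
    using subset[OF s t st] subset[OF t s st[symmetric]] by blast
qed

lemma germ_mult_cong:
  assumes s: "s \<in> S" "s' \<in> S" and t: "t \<in> S" "t' \<in> S"
    and f: "f \<in> E" "y \<in> dom (\<theta> f)" "s \<cdot> f = s' \<cdot> f"
    and e: "e \<in> E" "x \<in> dom (\<theta> e)" "t \<cdot> e = t' \<cdot> e"
    and txy: "\<theta> t x = Some y"
  shows "germ S mult \<theta> (s \<cdot> t) x = germ S mult \<theta> (s' \<cdot> t') x"
proof -
  \<comment> \<open>The idempotent e c witnesses the equality of germs because t c = f t.\<close>
  define c where "c = sinv t \<cdot> (f \<cdot> t)"
  have cE: "c \<in> E" and tc: "t \<cdot> c = f \<cdot> t"
    using conj_idem[OF t(1) f(1)] mult_conj_idem[OF t(1) f(1)] by (simp_all add: c_def)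
  have cS: "c \<in> S" and eS: "e \<in> S" and fS: "f \<in> S"
    using cE e(1) f(1) by (auto dest: idemsD)
  have ec: "e \<cdot> c = c \<cdot> e"
    using idems_commute[OF e(1) cE] .
  have "\<theta> c x = Some x"
    using t(1) fS txy idem_act_fix[OF f(1,2)] act_sinv[OF t(1) txy]
    by (simp add: c_def act_mult)
  then have k: "e \<cdot> c \<in> E" "x \<in> dom (\<theta> (e \<cdot> c))"
    using idems_mult_closed[OF e(1) cE] act_mult[of e c x] idem_act_fix[OF e(1,2)] eS cS
    by auto
  have "s \<cdot> t \<cdot> (e \<cdot> c) = s \<cdot> (t \<cdot> c \<cdot> e)"
    using s t eS cS ec by simp
  also have "\<dots> = s \<cdot> f \<cdot> (t \<cdot> e)"
    using s t eS fS tc by simp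
  also have "\<dots> = s' \<cdot> f \<cdot> (t \<cdot> e)"
    using f(3) by simp
  also have "\<dots> = s' \<cdot> (t \<cdot> c \<cdot> e)"
    using s t eS fS tc by simp
  also have "\<dots> = s' \<cdot> (t' \<cdot> e \<cdot> c)"
    using s t eS cS ec e(3)[symmetric] by simp
  also have "\<dots> = s' \<cdot> t' \<cdot> (e \<cdot> c)"
    using s t eS cS by simp
  finally show ?thesis
    using germ_eqI[OF _ _ k] s t by simp
qed

lemma germ_comp_germ:
  assumes s: "s \<in> S" "y \<in> dom (\<theta> s)" and t: "t \<in> S" "\<theta> t x = Some y"
  shows "germ_comp S mult \<theta> (germ S mult \<theta> s y) (germ S mult \<theta> t x) = germ S mult \<theta> (s \<cdot> t) x"
proof -
  obtain s' f where a: "germ_rep (germ S mult \<theta> s y) = (s', y)" "s' \<in> S" "f \<in> E"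
    "y \<in> dom (\<theta> f)" "s \<cdot> f = s' \<cdot> f"
    using germ_repE[OF s] .
  obtain t' e where b: "germ_rep (germ S mult \<theta> t x) = (t', x)" "t' \<in> S" "e \<in> E"
    "x \<in> dom (\<theta> e)" "t \<cdot> e = t' \<cdot> e"
    using germ_repE[OF t(1)] t(2) by blast
  have "germ_comp S mult \<theta> (germ S mult \<theta> s y) (germ S mult \<theta> t x) = germ S mult \<theta> (s' \<cdot> t') x"
    unfolding germ_comp_def a(1) b(1) by simp
  also have "\<dots> = germ S mult \<theta> (s \<cdot> t) x"
    using germ_mult_cong[OF s(1) a(2) t(1) b(2) a(3-5) b(3-5) t(2)] by simp
  finally show ?thesis .
qed

end

locale graded_inverse_semigroup_action =
  inverse_semigroup_action S mult z X \<theta>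
  for S :: "'s set" and mult :: "'s \<Rightarrow> 's \<Rightarrow> 's" (infixl "\<cdot>" 70) and z
    and X :: "'x set" and \<theta> +
  fixes deg :: "'s \<Rightarrow> 'g::group_add"
  assumes graded: "graded S mult z deg"
begin

lemma deg_mult: "s \<in> S \<Longrightarrow> t \<in> S \<Longrightarrow> s \<cdot> t \<noteq> z \<Longrightarrow> deg (s \<cdot> t) = deg s + deg t"
  using graded zero_mult mult_zero unfolding graded_def by blast

lemma deg_idem:
  assumes e: "e \<in> E" "e \<noteq> z"
  shows "deg e = 0"
proof -
  have "deg e + deg e = deg e + 0"
    using deg_mult[of e e] idemsD[OF e(1)] e(2) by simp
  then show ?thesis
    by (rule add_left_imp_eq)
qed

lemma germ_deg_germ:
  assumes s: "s \<in> S" "x \<in> dom (\<theta> s)"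
  shows "germ_deg deg (germ S mult \<theta> s x) = deg s"
proof -
  obtain t e where rep: "germ_rep (germ S mult \<theta> s x) = (t, x)" "t \<in> S" "e \<in> E"
    "x \<in> dom (\<theta> e)" "s \<cdot> e = t \<cdot> e"
    using germ_repE[OF s] .
  have eS: "e \<in> S" and e0: "deg e = 0"
    using rep(3,4) idemsD dom_act_nonzero deg_idem by auto
  have se: "s \<cdot> e \<noteq> z"
    using act_mult_idem[OF s(1) rep(3,4)] s(2) dom_act_nonzero[of x "s \<cdot> e"] by (auto simp: domIff)
  have "deg s = deg (s \<cdot> e)"
    using deg_mult[OF s(1) eS se] e0 by simp
  also have "\<dots> = deg t"
    using deg_mult[OF rep(2) eS] se e0 rep(5) by simp
  finally show ?thesis
    unfolding germ_deg_def rep(1) by simp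
qed

lemma germ_homog_mult_subset:
  "germ_set_mult S mult \<theta> (germ_homog S mult \<theta> deg \<alpha>) (germ_homog S mult \<theta> deg \<beta>)
     \<subseteq> germ_homog S mult \<theta> deg (\<alpha> + \<beta>)"
proof
  fix g
  assume "g \<in> germ_set_mult S mult \<theta> (germ_homog S mult \<theta> deg \<alpha>) (germ_homog S mult \<theta> deg \<beta>)"
  then obtain a b where g: "g = germ_comp S mult \<theta> a b" and ab: "germ_d a = germ_r \<theta> b"
    and a: "a \<in> germs S mult \<theta>" "germ_deg deg a = \<alpha>"
    and b: "b \<in> germs S mult \<theta>" "germ_deg deg b = \<beta>"
    unfolding germ_set_mult_def germ_homog_def by blast
  obtain s y where s: "s \<in> S" "y \<in> dom (\<theta> s)" "a = germ S mult \<theta> s y"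
    using a(1) by (rule germsE)
  obtain t x where t: "t \<in> S" "x \<in> dom (\<theta> t)" "b = germ S mult \<theta> t x"
    using b(1) by (rule germsE)
  have txy: "\<theta> t x = Some y"
    using ab s t germ_d_germ germ_r_germ by auto
  have st: "x \<in> dom (\<theta> (s \<cdot> t))"
    using s t txy by (auto simp: act_mult)
  have "g = germ S mult \<theta> (s \<cdot> t) x"
    using g s t txy germ_comp_germ by simp
  moreover have "deg (s \<cdot> t) = \<alpha> + \<beta>"
    using deg_mult[OF s(1) t(1) dom_act_nonzero[OF st]] a(2) b(2) s t germ_deg_germ by simp
  ultimately show "g \<in> germ_homog S mult \<theta> deg (\<alpha> + \<beta>)"
    unfolding germ_homog_def using s t st germ_in_germs germ_deg_germ by simp
qed

lemma germ_homog_subset_mult: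
  assumes "strongly_graded_sg S mult z deg"
  shows "germ_homog S mult \<theta> deg (\<alpha> + \<beta>)
     \<subseteq> germ_set_mult S mult \<theta> (germ_homog S mult \<theta> deg \<alpha>) (germ_homog S mult \<theta> deg \<beta>)"
proof
  fix g
  assume "g \<in> germ_homog S mult \<theta> deg (\<alpha> + \<beta>)"
  then have g: "g \<in> germs S mult \<theta>" "germ_deg deg g = \<alpha> + \<beta>"
    unfolding germ_homog_def by auto
  obtain u x where u: "u \<in> S" "x \<in> dom (\<theta> u)" "g = germ S mult \<theta> u x"
    using g(1) by (rule germsE)
  have "u \<in> homog S z deg (\<alpha> + \<beta>)"
    unfolding homog_def using u g(2) germ_deg_germ dom_act_nonzero by auto
  then obtain s t where st: "u = s \<cdot> t" "s \<in> homog S z deg \<alpha>" "t \<in> homog S z deg \<beta>"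
    using assms unfolding strongly_graded_sg_def set_mult_def by blast
  have sS: "s \<in> S" and tS: "t \<in> S"
    using st zero_closed unfolding homog_def by auto
  obtain y where txy: "\<theta> t x = Some y" and sy: "y \<in> dom (\<theta> s)"
    using u(2) st(1) sS tS by (cases "\<theta> t x") (auto simp: act_mult domIff)
  have tx: "x \<in> dom (\<theta> t)"
    using txy by blast
  have "deg s = \<alpha>" "deg t = \<beta>"
    using st sy tx dom_act_nonzero unfolding homog_def by auto
  then have "germ S mult \<theta> s y \<in> germ_homog S mult \<theta> deg \<alpha>"
    "germ S mult \<theta> t x \<in> germ_homog S mult \<theta> deg \<beta>"
    unfolding germ_homog_def using sS tS sy tx germ_in_germs germ_deg_germ by auto
  moreover have "germ_d (germ S mult \<theta> s y) = germ_r \<theta> (germ S mult \<theta> t x)"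
    using sS tS sy tx txy germ_d_germ germ_r_germ by simp
  moreover have "g = germ_comp S mult \<theta> (germ S mult \<theta> s y) (germ S mult \<theta> t x)"
    using u(3) st(1) sS tS sy txy germ_comp_germ by simp
  ultimately show "g \<in> germ_set_mult S mult \<theta> (germ_homog S mult \<theta> deg \<alpha>) (germ_homog S mult \<theta> deg \<beta>)"
    unfolding germ_set_mult_def by blast
qed

end

theorem proposition6p1:
  fixes S :: "'s set" and mult :: "'s \<Rightarrow> 's \<Rightarrow> 's" and z :: 's
    and deg :: "'s \<Rightarrow> 'g::group_add"
    and X :: "'x set" and \<theta> :: "'s \<Rightarrow> 'x \<rightharpoonup> 'x"
  assumes "inverse_semigroup0 S mult z"
    and "graded S mult z deg"
    and "partial_action S mult z X \<theta>"
    and "non_degenerate S mult X \<theta>"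
    and "X \<noteq> {}"
    and "strongly_graded_sg S mult z deg"
  shows "germ_strongly_graded S mult \<theta> deg"
proof -
  interpret graded_inverse_semigroup_action S mult z X \<theta> deg
    using assms(1-3) by unfold_locales
  show ?thesis
    unfolding germ_strongly_graded_def
    using germ_homog_mult_subset germ_homog_subset_mult[OF assms(6)] by blast
qed

end
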